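(* Let $(X,T)$ be a minimal system, $d\ge2$, and suppose the factor map $\pi:X\to Y=X_{eq}$ onto the maximal equicontinuous factor is almost one-to-one. Let $A=\{y\in X_{eq}:|\pi^{-1}(y)|\ge2\}$. (1) If $2A-A$ is of first category in $X_{eq}$, then $X_{eq}$ is a $2$-step topological characteristic factor of $X$ (saturation for $T\times T^2$). (2) If $d\ge3$ and $B_d:=\bigcup_{1\le i<j\le d}\left(\frac{j}{j-i}A-\frac{i}{j-i}A\right)$ is of first category, then $X_{eq}$ is a $d$-step topological characteristic factor of $X$ (saturation for $T\times T^2\times\cdots\times T^d$).
   Context: $X_{eq}$ is a compact abelian (monothetic) group on which $T$ acts as translation. For an abelian group $G$, $A\subset G$ and rational $r=p/q$, $rA=\{g\in G: qg=pa\text{ for some }a\in A\}$; $B-C=\{b-c:b\in B,c\in C\}$. $Y$ is a $d$-step topological characteristic factor of $X$ via $\pi$ if there is a dense $G_\delta$ set $\Omega\subset X$ such that for all $x\in\Omega$, $L_x=\overline{\{(T^nx,\dots,T^{dn}x):n\in\mathbb{Z}\}}$ satisfies $(\pi^{(d)})^{-1}(\pi^{(d)}(L_x))=L_x$, where $\pi^{(d)}=\pi\times\cdots\times\pi$. *)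

theory Defs
  imports "HOL-Analysis.Analysis"
begin

definition zpow :: "('a \<Rightarrow> 'a) \<Rightarrow> ('a \<Rightarrow> 'a) \<Rightarrow> int \<Rightarrow> 'a \<Rightarrow> 'a" where
  "zpow f g n = (if 0 \<le> n then f ^^ nat n else g ^^ nat (- n))"

text \<open>Topological dynamical system (X,T): X = UNIV of a compact metric type, T a homeomorphism.\<close>
definition tds :: "('a::metric_space \<Rightarrow> 'a) \<Rightarrow> bool" where
  "tds T \<longleftrightarrow> compact (UNIV::'a set) \<and> continuous_on UNIV T \<and> bij T"

definition minimal_system :: "('a::metric_space \<Rightarrow> 'a) \<Rightarrow> bool" where
  "minimal_system T \<longleftrightarrow> tds T \<and> (\<forall>x. closure {zpow T (inv T) n x | n. True} = UNIV)"

definition equicont :: "'z::metric_space set \<Rightarrow> ('z \<Rightarrow> 'z) \<Rightarrow> ('z \<Rightarrow> 'z) \<Rightarrow> bool" where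
  "equicont Z S S' \<longleftrightarrow> (\<forall>e>0. \<exists>\<delta>>0. \<forall>z\<in>Z. \<forall>z'\<in>Z. dist z z' < \<delta> \<longrightarrow>
      (\<forall>n::int. dist (zpow S S' n z) (zpow S S' n z') < e))"

text \<open>An equicontinuous factor (Z,S) of (X,T) via phi. Every compact metric space embeds
  into the Hilbert cube, so Z ranges over compact subsets of nat => real (product metric).\<close>
definition eq_factor :: "('a::metric_space \<Rightarrow> 'a) \<Rightarrow> (nat \<Rightarrow> real) set \<Rightarrow>
    ((nat \<Rightarrow> real) \<Rightarrow> (nat \<Rightarrow> real)) \<Rightarrow> ((nat \<Rightarrow> real) \<Rightarrow> (nat \<Rightarrow> real)) \<Rightarrow>
    ('a \<Rightarrow> (nat \<Rightarrow> real)) \<Rightarrow> bool" where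
  "eq_factor T Z S S' \<phi> \<longleftrightarrow> compact Z \<and> homeomorphism Z Z S S' \<and>
      continuous_on UNIV \<phi> \<and> range \<phi> = Z \<and> (\<forall>x. \<phi> (T x) = S (\<phi> x)) \<and> equicont Z S S'"

definition max_eq_factor :: "('a::metric_space \<Rightarrow> 'a) \<Rightarrow>
    ('a \<Rightarrow> 'b::{topological_ab_group_add, metric_space}) \<Rightarrow> 'b \<Rightarrow> bool" where
  "max_eq_factor T \<pi> \<alpha> \<longleftrightarrow> compact (UNIV::'b set) \<and> continuous_on UNIV \<pi> \<and> surj \<pi> \<and>
      (\<forall>x. \<pi> (T x) = \<pi> x + \<alpha>) \<and> equicont UNIV (\<lambda>y. y + \<alpha>) (\<lambda>y. y - \<alpha>) \<and>
      (\<forall>Z S S' \<phi>. eq_factor T Z S S' \<phi> \<longrightarrow>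
          (\<exists>\<psi>. continuous_on UNIV \<psi> \<and> (\<forall>x. \<phi> x = \<psi> (\<pi> x))))"

definition almost_one_to_one :: "('a::topological_space \<Rightarrow> 'b) \<Rightarrow> bool" where
  "almost_one_to_one \<pi> \<longleftrightarrow> gdelta {x. \<pi> -` {\<pi> x} = {x}} \<and> closure {x. \<pi> -` {\<pi> x} = {x}} = UNIV"

definition gmult :: "int \<Rightarrow> 'b::ab_group_add \<Rightarrow> 'b" where
  "gmult k g = (if 0 \<le> k then ((+) g ^^ nat k) 0 else - (((+) g ^^ nat (- k)) 0))"

text \<open>rA = {g. q g = p a for some a in A}, r = p/q in lowest terms, q > 0.\<close>
definition ratset :: "rat \<Rightarrow> 'b::ab_group_add set \<Rightarrow> 'b set" where
  "ratset r A = (case quotient_of r of (p, q) \<Rightarrow> {g. \<exists>a\<in>A. gmult q g = gmult p a})"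

definition setdiff_grp :: "'b::ab_group_add set \<Rightarrow> 'b set \<Rightarrow> 'b set" where
  "setdiff_grp B C = {b - c | b c. b \<in> B \<and> c \<in> C}"

definition first_category :: "'b::topological_space set \<Rightarrow> bool" where
  "first_category S \<longleftrightarrow> (\<exists>F :: nat \<Rightarrow> 'b set. S \<subseteq> (\<Union>n. F n) \<and> (\<forall>n. interior (closure (F n)) = {}))"

text \<open>d-tuples are extensional functions on {1..d} (undefined elsewhere), with the product topology.\<close>
definition Lset :: "('a::metric_space \<Rightarrow> 'a) \<Rightarrow> nat \<Rightarrow> 'a \<Rightarrow> (nat \<Rightarrow> 'a) set" where
  "Lset T d x = closure {(\<lambda>k. if k \<in> {1..d} then zpow T (inv T) (int k * n) x else undefined) | n. True}"

definition prodmap :: "('a \<Rightarrow> 'b) \<Rightarrow> nat \<Rightarrow> (nat \<Rightarrow> 'a) \<Rightarrow> (nat \<Rightarrow> 'b)" where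
  "prodmap \<pi> d f = (\<lambda>k. if k \<in> {1..d} then \<pi> (f k) else undefined)"

definition top_char_factor :: "('a::metric_space \<Rightarrow> 'a) \<Rightarrow> ('a \<Rightarrow> 'b) \<Rightarrow> nat \<Rightarrow> bool" where
  "top_char_factor T \<pi> d \<longleftrightarrow> (\<exists>\<Omega>. gdelta \<Omega> \<and> closure \<Omega> = UNIV \<and>
     (\<forall>x\<in>\<Omega>. {f \<in> extensional {1..d}. prodmap \<pi> d f \<in> prodmap \<pi> d ` Lset T d x} = Lset T d x))"

end

(* Write y = pi x. The image of L_x under pi^(d) is the set of all progressions
   (y + g, y + 2g, ..., y + dg), g in X_eq, and L_x is saturated over such a progression as soon as
   at most one of its terms lies in A: the other coordinates of a point in the fibre are then forced,
   and the remaining one is reached as a limit of points of L_x lying over progressions with no term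
   in A.  Such progressions are dense by Baire's theorem, because A is meagre and multiplication by
   k is an open map of the compact monothetic group X_eq.  If two terms y + ig, y + jg (i < j) lie in
   A, then after moving g along the orbit of alpha (which preserves A) we get j (y + ig) = (j - i) u
   for some u, hence i (y + jg) = (j - i) (u - y), so y = u - (u - y) lies in
   (j/(j-i))A - (i/(j-i))A.  Thus saturation holds for every x with pi x outside B_d, and these x
   form a dense G_delta set when B_d is of first category. *)

theory Submission
  imports Defs
begin

section \<open>Integer multiples in an abelian group\<close>

lemma gmult_0_left [simp]: "gmult 0 g = 0"
  by (simp add: gmult_def)

lemma gmult_1_left [simp]: "gmult 1 g = g"
  by (simp add: gmult_def)

lemma gmult_succ: "gmult (k + 1) g = gmult k g + g"
proof (cases "0 \<le> k")
  case True
  then have "nat (k + 1) = Suc (nat k)" by simp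
  with True show ?thesis by (simp add: gmult_def add.commute)
next
  case False
  then have "nat (- k) = Suc (nat (- (k + 1)))" by simp
  with False show ?thesis by (simp add: gmult_def algebra_simps)
qed

lemma gmult_pred: "gmult (k - 1) g = gmult k g - g"
  using gmult_succ[of "k - 1" g] by (simp add: algebra_simps)

lemma gmult_add_left: "gmult (a + b) g = gmult a g + gmult b g"
proof (induction b rule: int_induct[where k = 0])
  case (step1 i)
  then show ?case using gmult_succ[of "a + i" g] gmult_succ[of i g] by (simp add: algebra_simps)
next
  case (step2 i)
  have "gmult (a + (i - 1)) g = gmult (a + i) g - g"
    using gmult_pred[of "a + i" g] by (simp add: add_diff_eq)
  with step2 show ?case by (simp add: gmult_pred)
qed simp

lemma gmult_minus_left: "gmult (- a) g = - gmult a g"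
  by (rule add.inverse_unique[symmetric]) (use gmult_add_left[of a "- a" g] in simp)

lemma gmult_diff_left: "gmult (a - b) g = gmult a g - gmult b g"
  using gmult_add_left[of a "- b" g] by (simp add: gmult_minus_left)

lemma gmult_mult: "gmult (a * b) g = gmult a (gmult b g)"
proof (induction a rule: int_induct[where k = 0])
  case (step1 i)
  then show ?case by (simp add: distrib_right gmult_add_left gmult_succ)
next
  case (step2 i)
  then show ?case by (simp add: left_diff_distrib gmult_diff_left gmult_pred)
qed simp

lemma gmult_add_right: "gmult k (g + h) = gmult k g + gmult k h"
  by (induction k rule: int_induct[where k = 0]) (simp_all add: gmult_succ gmult_pred algebra_simps)

lemma gmult_0_right [simp]: "gmult k 0 = 0"
  using gmult_add_right[of k 0 0] by simp

lemma gmult_minus_right: "gmult k (- g) = - gmult k g"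
  by (rule add.inverse_unique[symmetric]) (use gmult_add_right[of k g "- g"] in simp)

lemma gmult_diff_right: "gmult k (g - h) = gmult k g - gmult k h"
  using gmult_add_right[of k g "- h"] by (simp add: gmult_minus_right)

lemma continuous_on_gmult:
  "continuous_on S (gmult k :: 'b::topological_ab_group_add \<Rightarrow> 'b)"
proof -
  have nat: "continuous_on S (\<lambda>g::'b. ((+) g ^^ n) 0)" for n
    by (induction n) (simp_all add: continuous_intros)
  show ?thesis
    unfolding gmult_def by (cases "0 \<le> k") (simp_all add: nat continuous_on_minus)
qed

lemma quotient_of_of_nat_divide:
  assumes "coprime j m" "m > 0"
  shows "quotient_of (of_nat j / of_nat m :: rat) = (int j, int m)"
proof -
  have "of_nat j / of_nat m = Fract (int j) (int m)"
    by (simp add: Fract_of_int_quotient)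
  then show ?thesis
    using assms by (simp add: quotient_of_Fract)
qed

lemma interior_Union_closed_nowhere_dense:
  fixes \<G> :: "'a::metric_space set set"
  assumes "compact (UNIV :: 'a set)" "countable \<G>"
    and "\<And>G. G \<in> \<G> \<Longrightarrow> closed G \<and> interior G = {}"
  shows "interior (\<Union>\<G>) = {}"
proof -
  have "locally_compact_space (euclidean :: 'a topology)"
    using assms(1) by (simp add: compact_imp_locally_compact_space compact_space_def compactin_euclidean_iff)
  then have "euclidean interior_of \<Union>\<G> = {}"
  proof (intro Baire_category_alt)
    show "countable \<G>" by (rule assms(2))
    fix G assume "G \<in> \<G>"
    then show "closedin euclidean G \<and> euclidean interior_of G = {}"
      using assms(3) by (simp add: euclidean_interior_of flip: closed_closedin)
  qed (use regular_space_euclidean in blast)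
  then show ?thesis by (simp add: euclidean_interior_of)
qed

lemma image_closure_compact_UNIV:
  fixes f :: "'a::topological_space \<Rightarrow> 'b::t2_space"
  assumes "compact (UNIV :: 'a set)" "continuous_on UNIV f"
  shows "f ` closure S = closure (f ` S)"
proof
  show "f ` closure S \<subseteq> closure (f ` S)"
    using assms(2) by (rule continuous_image_closure_subset) simp
  have "compact (closure S)"
    using compact_Int_closed[OF assms(1) closed_closure] by simp
  then have "closed (f ` closure S)"
    by (rule compact_imp_closed[OF compact_continuous_image[OF continuous_on_subset[OF assms(2) subset_UNIV]]])
  then show "closure (f ` S) \<subseteq> f ` closure S"
    by (simp add: closure_minimal closure_subset image_mono)
qed

lemma LIMSEQ_dist_less_inverse:
  fixes z :: "nat \<Rightarrow> 'a::metric_space"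
  assumes "\<And>n. dist (z n) c < inverse (real (Suc n))"
  shows "z \<longlonglongrightarrow> c"
proof (rule tendsto_dist_iff[THEN iffD2], rule Lim_null_comparison)
  show "\<forall>\<^sub>F n in sequentially. norm (dist (z n) c) \<le> inverse (real (Suc n))"
    using assms by (simp add: less_imp_le)
qed (rule LIMSEQ_inverse_real_of_nat)

lemma tendsto_fun_iff:
  fixes f :: "'i \<Rightarrow> 'c \<Rightarrow> 'a::topological_space"
  shows "(f \<longlongrightarrow> l) F \<longleftrightarrow> (\<forall>k. ((\<lambda>n. f n k) \<longlongrightarrow> l k) F)"
  using limitin_componentwise[of "\<lambda>_. euclidean" UNIV f l F]
  by (simp only: euclidean_product_topology) simp

lemma compact_UNIV_fun:
  assumes "compact (UNIV :: 'a::topological_space set)"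
  shows "compact (UNIV :: ('i \<Rightarrow> 'a) set)"
  using compactin_PiE[of "\<lambda>_::'i. (euclidean :: 'a topology)" UNIV "\<lambda>_. UNIV"] assms
  by (simp add: euclidean_product_topology compactin_euclidean_iff PiE_UNIV_domain)

section \<open>Compact monothetic groups\<close>

definition ratio_difference :: "'b::ab_group_add set \<Rightarrow> nat \<Rightarrow> nat \<Rightarrow> 'b set" where
  "ratio_difference A i j =
     setdiff_grp (ratset (of_nat j / of_nat (j - i)) A) (ratset (of_nat i / of_nat (j - i)) A)"

lemma coprime_diff_nat:
  fixes i j :: nat
  assumes "coprime i j" "i \<le> j"
  shows "coprime i (j - i)" "coprime j (j - i)"
proof -
  have "gcd (j - i) i = gcd j i"
    using assms(2) by (rule gcd_diff1_nat)
  moreover have "gcd (j - (j - i)) (j - i) = gcd j (j - i)"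
    by (rule gcd_diff1_nat) simp
  ultimately show "coprime i (j - i)" "coprime j (j - i)"
    using assms by (simp_all add: coprime_iff_gcd_eq_1 gcd.commute)
qed

locale compact_monothetic =
  fixes \<alpha> :: "'b::{topological_ab_group_add, metric_space}"
  assumes compact_UNIV: "compact (UNIV :: 'b set)"
    and dense_multiples: "closure (range (\<lambda>n. gmult n \<alpha>)) = UNIV"
begin

lemma closed_continuous_image:
  fixes f :: "'b \<Rightarrow> 'c::t2_space"
  assumes "continuous_on UNIV f" "closed F"
  shows "closed (f ` F)"
proof -
  have "compact F"
    using compact_Int_closed[OF compact_UNIV assms(2)] by simp
  then show ?thesis
    using assms(1) by (meson compact_continuous_image compact_imp_closed continuous_on_subset subset_UNIV)
qed

lemma open_translation_image:
  fixes V :: "'b set"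
  assumes "open V"
  shows "open ((+) c ` V)"
proof -
  have "(+) c ` V = (\<lambda>z. z - c) -` V"
    by (force simp: algebra_simps)
  with assms show ?thesis
    by (simp add: open_vimage continuous_on_diff)
qed

lemma UNIV_eq_translates_gmult_range:
  assumes "k > 0"
  shows "UNIV = (\<Union>r\<in>{0..<k}. (+) (gmult r \<alpha>) ` range (gmult k))"
proof -
  let ?U = "\<Union>r\<in>{0..<k}. (+) (gmult r \<alpha>) ` range (gmult k)"
  have "closed ?U"
    by (intro closed_UN finite_atLeastLessThan_int ballI closed_continuous_image continuous_intros
        continuous_on_gmult closed_UNIV)
  moreover have "range (\<lambda>n. gmult n \<alpha>) \<subseteq> ?U"
  proof clarify
    fix n
    have "gmult n \<alpha> = gmult (n mod k) \<alpha> + gmult k (gmult (n div k) \<alpha>)"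
      by (metis gmult_add_left gmult_mult mod_mult_div_eq)
    moreover have "n mod k \<in> {0..<k}" using assms by simp
    ultimately show "gmult n \<alpha> \<in> ?U" by blast
  qed
  ultimately show ?thesis
    using dense_multiples closure_minimal by blast
qed

lemma open_gmult_range:
  assumes "k > 0"
  shows "open (range (gmult k :: 'b \<Rightarrow> 'b))"
proof -
  let ?M = "range (gmult k :: 'b \<Rightarrow> 'b)"
  let ?R = "{r \<in> {0..<k}. gmult r \<alpha> \<notin> ?M}"
  have "- ?M = (\<Union>r\<in>?R. (+) (gmult r \<alpha>) ` ?M)"
  proof (intro equalityI subsetI)
    fix z assume z: "z \<in> - ?M"
    then obtain r w where r: "r \<in> {0..<k}" "z = gmult r \<alpha> + gmult k w"
      using UNIV_eq_translates_gmult_range[OF assms] by blast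
    have "gmult r \<alpha> \<notin> ?M"
    proof
      assume "gmult r \<alpha> \<in> ?M"
      then obtain v where "gmult r \<alpha> = gmult k v" by auto
      with r z show False by (auto simp: gmult_add_right[symmetric])
    qed
    with r show "z \<in> (\<Union>r\<in>?R. (+) (gmult r \<alpha>) ` ?M)" by blast
  next
    fix z assume "z \<in> (\<Union>r\<in>?R. (+) (gmult r \<alpha>) ` ?M)"
    then obtain r w where r: "gmult r \<alpha> \<notin> ?M" "z = gmult r \<alpha> + gmult k w" by blast
    show "z \<in> - ?M"
    proof
      assume "z \<in> ?M"
      then obtain v where "z = gmult k v" by auto
      with r have "gmult r \<alpha> = gmult k (v - w)" by (simp add: gmult_diff_right)
      with r show False by auto
    qed
  qed
  moreover have "finite ?R"
    by (rule finite_subset[of _ "{0..<k}"]) auto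
  then have "closed (\<Union>r\<in>?R. (+) (gmult r \<alpha>) ` ?M)"
    by (intro closed_UN ballI closed_continuous_image continuous_intros continuous_on_gmult) auto
  ultimately show ?thesis
    by (metis closed_def double_complement)
qed

text \<open>kV is the open subgroup kY minus the image of the closed complement of the saturation
  of V under the kernel of multiplication by k.\<close>
lemma open_gmult_image:
  fixes V :: "'b set"
  assumes "k > 0" "open V"
  shows "open (gmult k ` V)"
proof -
  define V' where "V' = (\<Union>t\<in>{t. gmult k t = 0}. (+) t ` V)"
  have "open V'"
    unfolding V'_def using assms(2) by (intro open_UN ballI open_translation_image)
  have "gmult k ` V = range (gmult k) - gmult k ` (- V')"
  proof (intro equalityI subsetI)
    fix z assume "z \<in> gmult k ` V"
    then obtain v where v: "v \<in> V" "z = gmult k v" by blast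
    have "w \<in> V'" if "gmult k w = z" for w
    proof -
      have "gmult k (w - v) = 0" using that v by (simp add: gmult_diff_right)
      then show ?thesis unfolding V'_def using v(1) by (intro UN_I[of "w - v"]) force+
    qed
    with v show "z \<in> range (gmult k) - gmult k ` (- V')" by blast
  next
    fix z assume "z \<in> range (gmult k) - gmult k ` (- V')"
    then obtain t v where "gmult k t = 0" "v \<in> V" "z = gmult k (t + v)"
      unfolding V'_def by blast
    then show "z \<in> gmult k ` V" by (simp add: gmult_add_right)
  qed
  moreover have "closed (gmult k ` (- V'))"
    using \<open>open V'\<close> by (intro closed_continuous_image continuous_on_gmult) (simp add: closed_Compl)
  ultimately show ?thesis
    using open_gmult_range[OF assms(1)] by (simp add: open_Diff)
qed

lemma interior_vimage_gmult_affine: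
  fixes y :: 'b
  assumes "k > 0" "interior F = {}"
  shows "interior ((\<lambda>g. y + gmult k g) -` F) = {}"
proof -
  let ?W = "interior ((\<lambda>g. y + gmult k g) -` F)"
  have "(+) y ` gmult k ` ?W \<subseteq> F"
  proof clarify
    fix w assume "w \<in> ?W"
    then show "y + gmult k w \<in> F"
      using interior_subset by blast
  qed
  moreover have "open ((+) y ` gmult k ` ?W)"
    using assms(1) by (intro open_translation_image open_gmult_image) auto
  ultimately have "(+) y ` gmult k ` ?W \<subseteq> interior F"
    by (rule interior_maximal)
  with assms(2) show ?thesis by simp
qed

lemma dense_avoiding_progressions:
  fixes y :: 'b and F :: "nat \<Rightarrow> 'b set"
  assumes "A \<subseteq> (\<Union>n. F n)" "\<And>n. closed (F n)" "\<And>n. interior (F n) = {}" "0 \<notin> K"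
  shows "closure {g. \<forall>k\<in>K. y + gmult (int k) g \<notin> A} = UNIV"
proof -
  define \<G> where "\<G> = (\<lambda>(k, n). (\<lambda>g. y + gmult (int k) g) -` F n) ` (K \<times> UNIV)"
  have "interior (\<Union>\<G>) = {}"
  proof (rule interior_Union_closed_nowhere_dense[OF compact_UNIV])
    show "countable \<G>"
      unfolding \<G>_def by (intro countable_image countableI_type)
    fix G assume "G \<in> \<G>"
    then obtain k n where k: "k \<in> K" and G: "G = (\<lambda>g. y + gmult (int k) g) -` F n"
      unfolding \<G>_def by auto
    have "closed G"
      unfolding G by (intro closed_vimage assms(2) continuous_on_add continuous_on_const continuous_on_gmult)
    moreover have "interior G = {}"
      unfolding G using k assms(3,4) by (intro interior_vimage_gmult_affine) (auto intro: gr0I)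
    ultimately show "closed G \<and> interior G = {}" ..
  qed
  then have "closure (- \<Union>\<G>) = UNIV"
    by (simp add: closure_complement)
  moreover have "- \<Union>\<G> \<subseteq> {g. \<forall>k\<in>K. y + gmult (int k) g \<notin> A}"
  proof clarify
    fix g k assume g: "g \<notin> \<Union>\<G>" and "k \<in> K" "y + gmult (int k) g \<in> A"
    then obtain n where "g \<in> (\<lambda>g. y + gmult (int k) g) -` F n"
      using assms(1) by auto
    moreover have "(\<lambda>g. y + gmult (int k) g) -` F n \<in> \<G>"
      unfolding \<G>_def using \<open>k \<in> K\<close> by (intro image_eqI[of _ _ "(k, n)"]) auto
    ultimately have "g \<in> \<Union>\<G>"
      by (rule UnionI[rotated])
    with g show False ..
  qed
  then have "closure (- \<Union>\<G>) \<subseteq> closure {g. \<forall>k\<in>K. y + gmult (int k) g \<notin> A}"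
    by (rule closure_mono)
  ultimately show ?thesis
    by auto
qed

lemma shift_multiple_divisible:
  fixes y g :: 'b
  assumes "coprime (J * I) M" "M > 0"
  obtains s p where "gmult M p = gmult J (y + gmult I (g + gmult s \<alpha>))"
proof -
  obtain u v where uv: "u * (J * I) + v * M = 1"
    using bezout_int[of "J * I" M] assms(1) by auto
  obtain r w where rw: "gmult J (y + gmult I g) = gmult r \<alpha> + gmult M w"
    using UNIV_eq_translates_gmult_range[OF assms(2)] by blast
  define s t where "s = - r * u" and "t = r * v"
  have rst: "M * t = r + J * I * s"
    using arg_cong[OF uv, of "(*) r"] by (simp add: s_def t_def algebra_simps)
  have "gmult M (gmult t \<alpha> + w) = gmult (M * t) \<alpha> + gmult M w"
    by (simp add: gmult_add_right gmult_mult)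
  also have "\<dots> = gmult J (y + gmult I g) + gmult (J * I * s) \<alpha>"
    by (simp add: rst rw gmult_add_left algebra_simps)
  also have "\<dots> = gmult J (y + gmult I (g + gmult s \<alpha>))"
    by (simp add: gmult_add_right gmult_mult mult.assoc add.assoc)
  finally show ?thesis
    by (rule that)
qed

lemma mem_ratio_difference_coprime:
  assumes A_inv: "\<And>a s. a \<in> A \<Longrightarrow> a + gmult s \<alpha> \<in> A"
    and ij: "i < j" "coprime i j"
    and A_i: "y + gmult (int i) g \<in> A" and A_j: "y + gmult (int j) g \<in> A"
  shows "y \<in> ratio_difference A i j"
proof -
  define I J M where "I = int i" and "J = int j" and "M = int (j - i)"
  have M_eq: "M = J - I" and "M > 0" using ij(1) by (simp_all add: I_def J_def M_def)
  have cop: "coprime i (j - i)" "coprime j (j - i)"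
    using coprime_diff_nat ij by simp_all
  then have "coprime (J * I) M" by (simp add: I_def J_def M_def)
  text \<open>Since M y = J (y + I G) - I (y + J G), it suffices that J (y + I G) is divisible by M.
    Replacing g by G = g + s \<alpha> keeps both terms in A, and Bezout gives an s that achieves this.\<close>
  then obtain s p where p: "gmult M p = gmult J (y + gmult I (g + gmult s \<alpha>))"
    using \<open>M > 0\<close> by (rule shift_multiple_divisible)
  define G where "G = g + gmult s \<alpha>"
  have a_i: "y + gmult I G \<in> A" and a_j: "y + gmult J G \<in> A"
    using A_inv[OF A_i, of "I * s"] A_inv[OF A_j, of "J * s"]
    by (simp_all add: G_def I_def J_def gmult_add_right gmult_mult add.assoc)
  have q: "gmult M (p - y) = gmult I (y + gmult J G)"
  proof -
    have "gmult M (p - y) = gmult J (y + gmult I G) - gmult (J - I) y"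
      using p by (simp add: G_def gmult_diff_right M_eq)
    also have "\<dots> = gmult I y + gmult (I * J) G"
      by (simp add: gmult_add_right gmult_diff_left mult.commute flip: gmult_mult)
    also have "\<dots> = gmult I (y + gmult J G)"
      by (simp add: gmult_add_right gmult_mult)
    finally show ?thesis .
  qed
  have "quotient_of (of_nat j / of_nat (j - i) :: rat) = (J, M)"
    "quotient_of (of_nat i / of_nat (j - i) :: rat) = (I, M)"
    unfolding I_def J_def M_def using cop ij(1)
    by (auto intro!: quotient_of_of_nat_divide simp del: of_nat_diff)
  with p q a_i a_j show ?thesis
    unfolding ratio_difference_def ratset_def setdiff_grp_def G_def
    by (intro CollectI exI[of _ p] exI[of _ "p - y"]) auto
qed

lemma mem_ratio_difference:
  assumes A_inv: "\<And>a s. a \<in> A \<Longrightarrow> a + gmult s \<alpha> \<in> A"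
    and ij: "0 < i" "i < j"
    and A_i: "y + gmult (int i) g \<in> A" and A_j: "y + gmult (int j) g \<in> A"
  shows "y \<in> ratio_difference A i j"
proof -
  define e where "e = gcd i j"
  have "e > 0" using ij by (simp add: e_def)
  obtain i' j' where ij': "i = i' * e" "j = j' * e" "coprime i' j'"
    using gcd_coprime_exists[of i j] \<open>e > 0\<close> unfolding e_def by blast
  have "i' < j'" using ij ij' \<open>e > 0\<close> by simp
  moreover have "y + gmult (int i') (gmult (int e) g) \<in> A" "y + gmult (int j') (gmult (int e) g) \<in> A"
    using A_i A_j by (simp_all add: ij' gmult_mult)
  ultimately have "y \<in> ratio_difference A i' j'"
    using mem_ratio_difference_coprime[OF A_inv] ij' by blast
  moreover have "j - i = (j' - i') * e"
    by (simp add: ij' diff_mult_distrib)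
  then have "of_nat j' / of_nat (j' - i') = (of_nat j / of_nat (j - i) :: rat)"
    "of_nat i' / of_nat (j' - i') = (of_nat i / of_nat (j - i) :: rat)"
    using \<open>e > 0\<close> by (simp_all add: ij')
  ultimately show ?thesis by (simp add: ratio_difference_def)
qed

end

section \<open>Almost one-to-one factor maps\<close>

locale almost_one_to_one_factor =
  fixes \<pi> :: "'a::metric_space \<Rightarrow> 'b::metric_space"
  assumes compact_domain: "compact (UNIV :: 'a set)"
    and continuous_factor: "continuous_on UNIV \<pi>"
    and surj_factor: "surj \<pi>"
    and almost_injective: "almost_one_to_one \<pi>"
begin

definition injectivity_points :: "'a set" where
  "injectivity_points = {x. \<pi> -` {\<pi> x} = {x}}"

definition multiple_points :: "'b set" where
  "multiple_points = {y. \<exists>x1 x2. x1 \<noteq> x2 \<and> \<pi> x1 = y \<and> \<pi> x2 = y}"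

lemma dense_injectivity_points: "closure injectivity_points = UNIV"
  using almost_injective by (simp add: almost_one_to_one_def injectivity_points_def)

lemma fibre_unique: "\<pi> a \<notin> multiple_points \<Longrightarrow> \<pi> b = \<pi> a \<Longrightarrow> b = a"
  unfolding multiple_points_def by blast

lemma injectivity_points_iff: "x \<in> injectivity_points \<longleftrightarrow> \<pi> x \<notin> multiple_points"
  unfolding injectivity_points_def multiple_points_def by (auto simp: set_eq_iff)

lemma obtain_injectivity_point:
  assumes "open U" "U \<noteq> {}"
  obtains x0 where "x0 \<in> injectivity_points" "x0 \<in> U"
  using open_Int_closure_eq_empty[OF assms(1), of injectivity_points] assms(2)
  by (auto simp: dense_injectivity_points)

lemma closed_image:
  assumes "closed F"
  shows "closed (\<pi> ` F)"
proof -
  have "compact F"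
    using compact_Int_closed[OF compact_domain assms] by simp
  then show ?thesis
    by (rule compact_imp_closed[OF compact_continuous_image[OF
          continuous_on_subset[OF continuous_factor subset_UNIV]]])
qed

lemma open_nhd_with_vimage_subset:
  assumes "x0 \<in> injectivity_points" "open U" "x0 \<in> U"
  obtains N where "open N" "\<pi> x0 \<in> N" "\<pi> -` N \<subseteq> U"
proof -
  have "open (- \<pi> ` (- U))"
    by (intro open_Compl closed_image closed_Compl assms(2))
  moreover have "\<pi> x0 \<in> - \<pi> ` (- U)"
  proof
    assume "\<pi> x0 \<in> \<pi> ` (- U)"
    then obtain x where "x \<notin> U" "\<pi> x = \<pi> x0" by auto
    with assms(1) have "x = x0" by (auto simp: injectivity_points_def)
    with \<open>x \<notin> U\<close> assms(3) show False by simp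
  qed
  moreover have "\<pi> -` (- \<pi> ` (- U)) \<subseteq> U"
    by blast
  ultimately show ?thesis using that by blast
qed

lemma open_nhd_in_image:
  assumes "x0 \<in> injectivity_points" "open U" "x0 \<in> U"
  obtains N where "open N" "\<pi> x0 \<in> N" "N \<subseteq> \<pi> ` U"
proof -
  obtain N where "open N" "\<pi> x0 \<in> N" "\<pi> -` N \<subseteq> U"
    using open_nhd_with_vimage_subset[OF assms] .
  have "N \<subseteq> \<pi> ` (\<pi> -` N)"
    using surj_factor by (simp add: image_vimage_eq)
  also have "\<dots> \<subseteq> \<pi> ` U"
    using \<open>\<pi> -` N \<subseteq> U\<close> by (rule image_mono)
  finally show ?thesis
    using that \<open>open N\<close> \<open>\<pi> x0 \<in> N\<close> by blast
qed

lemma tendsto_injectivity_point: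
  assumes "\<pi> p \<notin> multiple_points" "((\<lambda>n. \<pi> (x n)) \<longlongrightarrow> \<pi> p) F"
  shows "(x \<longlongrightarrow> p) F"
proof (rule topological_tendstoI)
  fix U assume "open U" "p \<in> U"
  moreover have "p \<in> injectivity_points"
    using assms(1) by (simp add: injectivity_points_iff)
  ultimately obtain N where "open N" "\<pi> p \<in> N" "\<pi> -` N \<subseteq> U"
    using open_nhd_with_vimage_subset by blast
  have "\<forall>\<^sub>F n in F. \<pi> (x n) \<in> N"
    using assms(2) \<open>open N\<close> \<open>\<pi> p \<in> N\<close> by (rule topological_tendstoD)
  then show "\<forall>\<^sub>F n in F. x n \<in> U"
    by (rule eventually_mono) (use \<open>\<pi> -` N \<subseteq> U\<close> in blast)
qed

lemma interior_vimage_empty: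
  assumes "interior F = {}"
  shows "interior (\<pi> -` F) = {}"
proof (rule ccontr)
  assume "interior (\<pi> -` F) \<noteq> {}"
  then obtain x0 where x0: "x0 \<in> injectivity_points" "x0 \<in> interior (\<pi> -` F)"
    using obtain_injectivity_point[OF open_interior] by blast
  then obtain N where "open N" "\<pi> x0 \<in> N" "N \<subseteq> \<pi> ` interior (\<pi> -` F)"
    using open_nhd_in_image by blast
  moreover have "\<pi> ` interior (\<pi> -` F) \<subseteq> F"
    using interior_subset by blast
  ultimately have "N \<subseteq> interior F"
    by (intro interior_maximal) auto
  with assms \<open>\<pi> x0 \<in> N\<close> show False by auto
qed

definition wide_fibre_points :: "nat \<Rightarrow> 'b set" where
  "wide_fibre_points n = (\<lambda>p. \<pi> (fst p)) `
     {p. \<pi> (fst p) = \<pi> (snd p) \<and> inverse (real (Suc n)) \<le> dist (fst p) (snd p)}"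

lemma multiple_points_eq_Union_wide_fibre_points: "multiple_points = (\<Union>n. wide_fibre_points n)"
proof (intro equalityI subsetI)
  fix y assume "y \<in> multiple_points"
  then obtain x1 x2 where x: "x1 \<noteq> x2" "\<pi> x1 = y" "\<pi> x2 = y"
    unfolding multiple_points_def by blast
  then obtain n where "inverse (real (Suc n)) < dist x1 x2"
    using reals_Archimedean zero_less_dist_iff by blast
  with x have "(x1, x2) \<in> {p. \<pi> (fst p) = \<pi> (snd p) \<and> inverse (real (Suc n)) \<le> dist (fst p) (snd p)}"
    by simp
  then have "y \<in> wide_fibre_points n"
    unfolding wide_fibre_points_def by (rule rev_image_eqI) (simp add: x)
  then show "y \<in> (\<Union>n. wide_fibre_points n)" by blast
next
  fix y assume "y \<in> (\<Union>n. wide_fibre_points n)"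
  then obtain n a b where "\<pi> a = y" "\<pi> b = y" "inverse (real (Suc n)) \<le> dist a b"
    unfolding wide_fibre_points_def by auto
  moreover have "a \<noteq> b"
    using \<open>inverse (real (Suc n)) \<le> dist a b\<close> by auto
  ultimately show "y \<in> multiple_points"
    unfolding multiple_points_def by blast
qed

lemma closed_wide_fibre_points: "closed (wide_fibre_points n)"
proof -
  let ?S = "{p::'a \<times> 'a. \<pi> (fst p) = \<pi> (snd p) \<and> inverse (real (Suc n)) \<le> dist (fst p) (snd p)}"
  have c: "continuous_on UNIV (\<lambda>p::'a \<times> 'a. \<pi> (fst p))" "continuous_on UNIV (\<lambda>p::'a \<times> 'a. \<pi> (snd p))"
    by (rule continuous_on_compose2[OF continuous_factor], intro continuous_intros, simp)+
  have "closed ?S"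
    using c by (intro closed_Collect_conj closed_Collect_eq closed_Collect_le continuous_intros)
  then have "compact ?S"
    using compact_Int_closed[OF compact_Times[OF compact_domain compact_domain]] by simp
  then show ?thesis
    unfolding wide_fibre_points_def
    by (rule compact_imp_closed[OF compact_continuous_image[OF continuous_on_subset[OF c(1) subset_UNIV]]])
qed

lemma interior_wide_fibre_points: "interior (wide_fibre_points n) = {}"
proof (rule ccontr)
  assume "interior (wide_fibre_points n) \<noteq> {}"
  then obtain y where "y \<in> interior (wide_fibre_points n)"
    by blast
  moreover obtain x where "\<pi> x = y"
    using surj_factor by (metis surjD)
  ultimately have "\<pi> -` interior (wide_fibre_points n) \<noteq> {}"
    by blast
  then obtain x0 where "x0 \<in> injectivity_points" "\<pi> x0 \<in> interior (wide_fibre_points n)"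
    using obtain_injectivity_point[OF open_vimage[OF open_interior continuous_factor]] by blast
  then have "\<pi> x0 \<in> wide_fibre_points n"
    using interior_subset by blast
  then have "\<pi> x0 \<in> multiple_points"
    unfolding multiple_points_eq_Union_wide_fibre_points by blast
  with \<open>x0 \<in> injectivity_points\<close> show False
    by (simp add: injectivity_points_iff)
qed

lemma dense_gdelta_avoiding_first_category:
  assumes "first_category B"
  obtains \<Omega> where "gdelta \<Omega>" "closure \<Omega> = UNIV" "\<And>x. x \<in> \<Omega> \<Longrightarrow> \<pi> x \<notin> B"
proof -
  obtain F :: "nat \<Rightarrow> 'b set" where F: "B \<subseteq> (\<Union>n. F n)" "\<And>n. interior (closure (F n)) = {}"
    using assms unfolding first_category_def by blast
  define \<Omega> where "\<Omega> = (\<Inter>n. - \<pi> -` closure (F n))"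
  have "gdelta \<Omega>"
    unfolding \<Omega>_def by (intro gdelta.intros open_Compl closed_vimage closed_closure continuous_factor)
  moreover have "interior (\<Union>n. \<pi> -` closure (F n)) = {}"
  proof (rule interior_Union_closed_nowhere_dense[OF compact_domain])
    fix G assume "G \<in> range (\<lambda>n. \<pi> -` closure (F n))"
    then show "closed G \<and> interior G = {}"
      using closed_vimage[OF closed_closure continuous_factor] interior_vimage_empty[OF F(2)] by blast
  qed simp
  then have "closure \<Omega> = UNIV"
    unfolding \<Omega>_def by (simp add: closure_complement flip: Compl_UN)
  moreover have "\<pi> x \<notin> B" if "x \<in> \<Omega>" for x
    using that F(1) closure_subset unfolding \<Omega>_def by blast
  ultimately show ?thesis using that by blast
qed

end

section \<open>Almost automorphic systems\<close>

lemma funpow_semiconj_gmult: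
  assumes "\<And>x. h (f x) = h x + a"
  shows "h ((f ^^ m) x) = h x + gmult (int m) a"
  by (induction m) (simp_all add: assms gmult_add_left ac_simps)

lemma zpow_semiconj_gmult:
  assumes "bij f" "\<And>x. h (f x) = h x + a"
  shows "h (zpow f (inv f) n x) = h x + gmult n a"
proof -
  have "h (inv f y) = h y + - a" for y
  proof -
    have "h y = h (inv f y) + a"
      using assms(2)[of "inv f y"] assms(1) by (simp add: bij_is_surj surj_f_inv_f)
    then show ?thesis by (simp add: algebra_simps)
  qed
  then have "h ((inv f ^^ m) y) = h y + gmult (int m) (- a)" for m y
    by (rule funpow_semiconj_gmult)
  moreover have "h ((f ^^ m) y) = h y + gmult (int m) a" for m y
    using assms(2) by (rule funpow_semiconj_gmult)
  ultimately show ?thesis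
    by (simp add: zpow_def gmult_minus_right gmult_minus_left[symmetric])
qed

lemma inj_zpow: "bij f \<Longrightarrow> inj (zpow f (inv f) n)"
  by (simp add: zpow_def bij_is_inj bij_imp_bij_inv)

lemma Lset_subset_extensional: "Lset T d x \<subseteq> extensional {1..d}"
proof -
  have "extensional {1..d} = (\<Inter>k\<in>- {1..d}. (\<lambda>f :: nat \<Rightarrow> 'a. f k) -` {undefined})"
    by (auto simp: extensional_def)
  then have "closed (extensional {1..d} :: (nat \<Rightarrow> 'a) set)"
    by (simp add: closed_INT closed_vimage continuous_on_product_coordinates)
  then show ?thesis
    unfolding Lset_def by (rule closure_minimal[rotated]) (auto simp: extensional_def)
qed

lemma closed_Lset: "closed (Lset T d x)"
  by (simp add: Lset_def)

lemma continuous_on_prodmap: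
  assumes "continuous_on UNIV \<pi>"
  shows "continuous_on UNIV (prodmap \<pi> d)"
proof (rule continuous_on_coordinatewise_then_product)
  fix k
  show "continuous_on UNIV (\<lambda>f. prodmap \<pi> d f k)"
    by (cases "k \<in> {1..d}")
      (auto simp: prodmap_def intro: continuous_on_compose2[OF assms continuous_on_product_coordinates])
qed

definition progression :: "nat \<Rightarrow> 'b::ab_group_add \<Rightarrow> 'b \<Rightarrow> nat \<Rightarrow> 'b" where
  "progression d y g = (\<lambda>k. if k \<in> {1..d} then y + gmult (int k) g else undefined)"

lemma continuous_on_progression:
  "continuous_on UNIV (progression d (y :: 'b::topological_ab_group_add))"
proof (rule continuous_on_coordinatewise_then_product)
  fix k
  show "continuous_on UNIV (\<lambda>g. progression d y g k)"
    by (cases "k \<in> {1..d}") (auto simp: progression_def intro: continuous_intros continuous_on_gmult)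
qed

lemma prodmap_eq_progressionD:
  "prodmap \<pi> d f = progression d y g \<Longrightarrow> k \<in> {1..d} \<Longrightarrow> \<pi> (f k) = y + gmult (int k) g"
  by (drule fun_cong[of _ _ k]) (simp add: prodmap_def progression_def)

lemma at_most_one_exception:
  fixes d :: nat
  assumes "0 < d" and at_most_one: "\<And>i j. 0 < i \<Longrightarrow> i < j \<Longrightarrow> j \<le> d \<Longrightarrow> P i \<Longrightarrow> P j \<Longrightarrow> False"
  obtains k0 where "k0 \<in> {1..d}" "\<And>k. k \<in> {1..d} \<Longrightarrow> k \<noteq> k0 \<Longrightarrow> \<not> P k"
proof (cases "\<exists>k0\<in>{1..d}. P k0")
  case True
  then obtain k0 where k0: "k0 \<in> {1..d}" "P k0"
    by blast
  have "\<not> P k" if "k \<in> {1..d}" "k \<noteq> k0" for k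
    using at_most_one[of k k0] at_most_one[of k0 k] that k0 by (cases "k < k0") auto
  with k0(1) show ?thesis
    using that by blast
next
  case False
  with assms(1) show ?thesis
    using that[of 1] by auto
qed

locale almost_automorphic_system =
  fixes T :: "'a::metric_space \<Rightarrow> 'a"
    and \<pi> :: "'a \<Rightarrow> 'b::{topological_ab_group_add, metric_space}"
    and \<alpha> :: 'b
  assumes minimal: "minimal_system T"
    and max_eq_factor: "max_eq_factor T \<pi> \<alpha>"
    and almost_one_to_one: "almost_one_to_one \<pi>"
begin

lemma bij_T: "bij T"
  using minimal by (simp add: minimal_system_def tds_def)

lemma factor_T: "\<pi> (T x) = \<pi> x + \<alpha>"
  using max_eq_factor by (simp add: max_eq_factor_def)

lemma factor_zpow: "\<pi> (zpow T (inv T) n x) = \<pi> x + gmult n \<alpha>"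
  using bij_T factor_T by (rule zpow_semiconj_gmult)

sublocale almost_one_to_one_factor \<pi>
  using minimal max_eq_factor almost_one_to_one
  by unfold_locales (auto simp: minimal_system_def tds_def max_eq_factor_def)

lemma dense_multiples_alpha: "closure (range (\<lambda>n. gmult n \<alpha>)) = UNIV"
proof -
  fix x :: 'a
  let ?R = "range (\<lambda>n. gmult n \<alpha>)"
  have "closure (range (\<lambda>n. zpow T (inv T) n x)) = UNIV"
    using minimal unfolding minimal_system_def by (metis full_SetCompr_eq)
  then have "UNIV = \<pi> ` closure (range (\<lambda>n. zpow T (inv T) n x))"
    using surj_factor by simp
  also have "\<dots> \<subseteq> closure (\<pi> ` range (\<lambda>n. zpow T (inv T) n x))"
    by (rule continuous_image_closure_subset[OF continuous_factor subset_UNIV])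
  also have "\<pi> ` range (\<lambda>n. zpow T (inv T) n x) = (+) (\<pi> x) ` ?R"
    by (auto simp: factor_zpow image_image)
  finally have dense: "closure ((+) (\<pi> x) ` ?R) = UNIV"
    by blast
  have "UNIV = (\<lambda>z. z - \<pi> x) ` closure ((+) (\<pi> x) ` ?R)"
    unfolding dense by (metis surj_def add_diff_cancel)
  also have "\<dots> \<subseteq> closure ((\<lambda>z. z - \<pi> x) ` (+) (\<pi> x) ` ?R)"
    by (intro continuous_image_closure_subset[of UNIV] continuous_intros) simp
  finally show ?thesis
    by (simp add: image_image top.extremum_unique)
qed

sublocale compact_monothetic \<alpha>
  using max_eq_factor dense_multiples_alpha by unfold_locales (simp_all add: max_eq_factor_def)

lemma multiple_points_translate:
  assumes "a \<in> multiple_points"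
  shows "a + gmult s \<alpha> \<in> multiple_points"
proof -
  obtain x1 x2 where "x1 \<noteq> x2" "\<pi> x1 = a" "\<pi> x2 = a"
    using assms unfolding multiple_points_def by blast
  moreover have "inj (zpow T (inv T) s)"
    using bij_T by (rule inj_zpow)
  ultimately have "zpow T (inv T) s x1 \<noteq> zpow T (inv T) s x2"
    "\<pi> (zpow T (inv T) s x1) = a + gmult s \<alpha>" "\<pi> (zpow T (inv T) s x2) = a + gmult s \<alpha>"
    by (auto simp: factor_zpow inj_eq)
  then show ?thesis
    unfolding multiple_points_def by blast
qed

lemma prodmap_Lset: "prodmap \<pi> d ` Lset T d x = range (progression d (\<pi> x))"
proof -
  define orbit where "orbit n = (\<lambda>k. if k \<in> {1..d} then zpow T (inv T) (int k * n) x else undefined)" for n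
  have "Lset T d x = closure (range orbit)"
    by (simp add: Lset_def orbit_def full_SetCompr_eq)
  then have "prodmap \<pi> d ` Lset T d x = closure (prodmap \<pi> d ` range orbit)"
    by (simp add: image_closure_compact_UNIV compact_UNIV_fun compact_domain continuous_on_prodmap
        continuous_factor)
  also have "prodmap \<pi> d (orbit n) = progression d (\<pi> x) (gmult n \<alpha>)" for n
    by (simp add: orbit_def prodmap_def progression_def factor_zpow gmult_mult fun_eq_iff)
  then have "prodmap \<pi> d ` range orbit = progression d (\<pi> x) ` range (\<lambda>n. gmult n \<alpha>)"
    by (simp add: image_image)
  also have "closure \<dots> = progression d (\<pi> x) ` closure (range (\<lambda>n. gmult n \<alpha>))"
    by (intro image_closure_compact_UNIV[symmetric] compact_UNIV continuous_on_progression)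
  finally show ?thesis
    by (simp add: dense_multiples)
qed

lemma approx_lift:
  assumes "0 < k" "\<pi> x1 = y + gmult (int k) g" "open U" "x1 \<in> U" "open W" "g \<in> W"
    and "closure G = UNIV"
  obtains x' g' where "x' \<in> U" "g' \<in> W" "g' \<in> G" "\<pi> x' = y + gmult (int k) g'"
proof -
  define U' where "U' = U \<inter> \<pi> -` ((+) y ` gmult (int k) ` W)"
  have "open U'"
    unfolding U'_def using assms(1,3,5)
    by (intro open_Int open_vimage[OF _ continuous_factor] open_translation_image open_gmult_image) auto
  moreover have "x1 \<in> U'"
    unfolding U'_def using assms(2,4,6) by auto
  ultimately obtain x0 where x0: "x0 \<in> injectivity_points" "x0 \<in> U'"
    using obtain_injectivity_point by blast
  then obtain N where N: "open N" "\<pi> x0 \<in> N" "N \<subseteq> \<pi> ` U'"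
    using open_nhd_in_image \<open>open U'\<close> by blast
  obtain w where w: "w \<in> W" "\<pi> x0 = y + gmult (int k) w"
    using x0(2) unfolding U'_def by auto
  define W' where "W' = W \<inter> (\<lambda>g. y + gmult (int k) g) -` N"
  have "open W'"
    unfolding W'_def using assms(5) N(1)
    by (intro open_Int open_vimage continuous_intros continuous_on_gmult)
  moreover have "w \<in> W'"
    unfolding W'_def using w N(2) by simp
  ultimately have "W' \<inter> G \<noteq> {}"
    using open_Int_closure_eq_empty[of W' G] assms(7) by auto
  then obtain g' where g': "g' \<in> G" "g' \<in> W'"
    by blast
  then have "y + gmult (int k) g' \<in> \<pi> ` U'"
    using N(3) unfolding W'_def by auto
  then obtain x' where "x' \<in> U'" "\<pi> x' = y + gmult (int k) g'"
    by auto
  with g' show ?thesis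
    unfolding U'_def W'_def by (intro that[of x' g']) auto
qed

lemma approx_lift_sequence:
  assumes "0 < k" "\<pi> x1 = y + gmult (int k) g" "closure G = UNIV"
  obtains xs gs where "xs \<longlonglongrightarrow> x1" "gs \<longlonglongrightarrow> g" "\<And>n. gs n \<in> G"
    "\<And>n. \<pi> (xs n) = y + gmult (int k) (gs n)"
proof -
  have "\<forall>n. \<exists>x'. \<exists>g'. dist x' x1 < inverse (real (Suc n)) \<and> dist g' g < inverse (real (Suc n)) \<and>
      g' \<in> G \<and> \<pi> x' = y + gmult (int k) g'"
  proof
    fix n
    show "\<exists>x'. \<exists>g'. dist x' x1 < inverse (real (Suc n)) \<and> dist g' g < inverse (real (Suc n)) \<and>
      g' \<in> G \<and> \<pi> x' = y + gmult (int k) g'"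
      by (rule approx_lift[OF assms(1,2) open_ball _ open_ball _ assms(3),
            of x1 "inverse (real (Suc n))" g "inverse (real (Suc n))"])
        (auto simp: dist_commute)
  qed
  then obtain xs where "\<forall>n. \<exists>g'. dist (xs n) x1 < inverse (real (Suc n)) \<and>
      dist g' g < inverse (real (Suc n)) \<and> g' \<in> G \<and> \<pi> (xs n) = y + gmult (int k) g'"
    by (rule choice[THEN exE])
  then obtain gs where seq: "\<forall>n. dist (xs n) x1 < inverse (real (Suc n)) \<and>
      dist (gs n) g < inverse (real (Suc n)) \<and> gs n \<in> G \<and> \<pi> (xs n) = y + gmult (int k) (gs n)"
    by (rule choice[THEN exE])
  show ?thesis
  proof (rule that)
    show "xs \<longlonglongrightarrow> x1" "gs \<longlonglongrightarrow> g"
      using seq by (auto intro: LIMSEQ_dist_less_inverse)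
  qed (use seq in auto)
qed

lemma Lset_sequence_over_progressions:
  obtains ts where "\<And>n. ts n \<in> Lset T d x" "\<And>n. prodmap \<pi> d (ts n) = progression d (\<pi> x) (gs n)"
proof -
  have "progression d (\<pi> x) (gs n) \<in> prodmap \<pi> d ` Lset T d x" for n
    by (simp add: prodmap_Lset)
  then have "\<forall>n. \<exists>t. t \<in> Lset T d x \<and> prodmap \<pi> d t = progression d (\<pi> x) (gs n)"
    by (metis imageE)
  then obtain ts where "\<forall>n. ts n \<in> Lset T d x \<and> prodmap \<pi> d (ts n) = progression d (\<pi> x) (gs n)"
    by (rule choice[THEN exE])
  with that show ?thesis
    by blast
qed

lemma dense_avoiding_multiple_points:
  "closure {g. \<forall>k\<in>{1..d}. y + gmult (int k) g \<notin> multiple_points} = UNIV"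
proof -
  have "multiple_points \<subseteq> (\<Union>n. wide_fibre_points n)"
    by (simp add: multiple_points_eq_Union_wide_fibre_points)
  then show ?thesis
    using closed_wide_fibre_points interior_wide_fibre_points
    by (rule dense_avoiding_progressions) simp
qed

lemma tendsto_progression_coordinate:
  assumes "\<And>n. prodmap \<pi> d (ts n) = progression d y (gs n)" "gs \<longlonglongrightarrow> g" "k \<in> {1..d}"
    and "\<pi> p = y + gmult (int k) g" "\<pi> p \<notin> multiple_points"
  shows "(\<lambda>n. ts n k) \<longlonglongrightarrow> p"
proof (rule tendsto_injectivity_point[OF assms(5)])
  have "(\<lambda>n. y + gmult (int k) (gs n)) \<longlonglongrightarrow> y + gmult (int k) g"
    by (intro tendsto_add tendsto_const continuous_on_tendsto_compose[OF continuous_on_gmult[of UNIV] assms(2)])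
      simp_all
  then show "(\<lambda>n. \<pi> (ts n k)) \<longlonglongrightarrow> \<pi> p"
    using prodmap_eq_progressionD[OF assms(1,3)] assms(4) by simp
qed

lemma mem_Lset_if_single_exception:
  assumes f_ext: "f \<in> extensional {1..d}"
    and f: "\<And>k. k \<in> {1..d} \<Longrightarrow> \<pi> (f k) = \<pi> x + gmult (int k) g"
    and k0: "k0 \<in> {1..d}"
    and others: "\<And>k. k \<in> {1..d} \<Longrightarrow> k \<noteq> k0 \<Longrightarrow> \<pi> x + gmult (int k) g \<notin> multiple_points"
  shows "f \<in> Lset T d x"
proof -
  let ?G = "{g. \<forall>k\<in>{1..d}. \<pi> x + gmult (int k) g \<notin> multiple_points}"
  obtain xs gs where xs: "xs \<longlonglongrightarrow> f k0" and gs: "gs \<longlonglongrightarrow> g" "\<And>n. gs n \<in> ?G"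
    and xs_gs: "\<And>n. \<pi> (xs n) = \<pi> x + gmult (int k0) (gs n)"
    using approx_lift_sequence[of k0 "f k0" "\<pi> x" g ?G] k0 f dense_avoiding_multiple_points by auto
  obtain ts where ts: "\<And>n. ts n \<in> Lset T d x"
    and ts_gs: "\<And>n. prodmap \<pi> d (ts n) = progression d (\<pi> x) (gs n)"
    using Lset_sequence_over_progressions by metis
  have "(\<lambda>n. ts n k) \<longlonglongrightarrow> f k" for k
  proof (cases "k \<in> {1..d}")
    case False
    have "ts n k = f k" for n
      using extensional_arb[OF _ False] subsetD[OF Lset_subset_extensional ts] f_ext by metis
    then show ?thesis by simp
  next
    case True
    show ?thesis
    proof (cases "k = k0")
      case True
      have "ts n k0 = xs n" for n
      proof (rule fibre_unique)
        show "\<pi> (xs n) \<notin> multiple_points"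
          using gs(2)[of n] k0 xs_gs[of n] by simp
        show "\<pi> (ts n k0) = \<pi> (xs n)"
          using prodmap_eq_progressionD[OF ts_gs k0] xs_gs[of n] by simp
      qed
      with xs True show ?thesis by simp
    next
      case False
      with \<open>k \<in> {1..d}\<close> show ?thesis
        using f others by (intro tendsto_progression_coordinate[OF ts_gs gs(1)]) simp_all
    qed
  qed
  then have "ts \<longlonglongrightarrow> f"
    by (simp add: tendsto_fun_iff)
  then show ?thesis
    using closed_sequentially[OF closed_Lset] ts by blast
qed

lemma Lset_saturated:
  assumes "0 < d"
    and at_most_one: "\<And>g i j. 0 < i \<Longrightarrow> i < j \<Longrightarrow> j \<le> d \<Longrightarrow>
      \<pi> x + gmult (int i) g \<in> multiple_points \<Longrightarrow> \<pi> x + gmult (int j) g \<in> multiple_points \<Longrightarrow> False"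
  shows "{f \<in> extensional {1..d}. prodmap \<pi> d f \<in> prodmap \<pi> d ` Lset T d x} = Lset T d x"
proof (intro equalityI subsetI)
  fix f assume "f \<in> Lset T d x"
  then show "f \<in> {f \<in> extensional {1..d}. prodmap \<pi> d f \<in> prodmap \<pi> d ` Lset T d x}"
    using Lset_subset_extensional by blast
next
  fix f assume "f \<in> {f \<in> extensional {1..d}. prodmap \<pi> d f \<in> prodmap \<pi> d ` Lset T d x}"
  then obtain g where f_ext: "f \<in> extensional {1..d}" and fg: "prodmap \<pi> d f = progression d (\<pi> x) g"
    by (auto simp: prodmap_Lset)
  obtain k0 where "k0 \<in> {1..d}"
    "\<And>k. k \<in> {1..d} \<Longrightarrow> k \<noteq> k0 \<Longrightarrow> \<pi> x + gmult (int k) g \<notin> multiple_points"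
    using at_most_one_exception[OF \<open>0 < d\<close>, of "\<lambda>k. \<pi> x + gmult (int k) g \<in> multiple_points"]
      at_most_one by blast
  then show "f \<in> Lset T d x"
    by (intro mem_Lset_if_single_exception[OF f_ext prodmap_eq_progressionD[OF fg]])
qed

lemma top_char_factor_if_first_category:
  assumes "0 < d"
    and "first_category (\<Union>j\<in>{1..d}. \<Union>i\<in>{1..<j}. ratio_difference multiple_points i j)"
  shows "top_char_factor T \<pi> d"
proof -
  obtain \<Omega> where \<Omega>: "gdelta \<Omega>" "closure \<Omega> = UNIV"
    and avoid: "\<And>x. x \<in> \<Omega> \<Longrightarrow> \<pi> x \<notin> (\<Union>j\<in>{1..d}. \<Union>i\<in>{1..<j}. ratio_difference multiple_points i j)"
    using dense_gdelta_avoiding_first_category[OF assms(2)] by blast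
  have "{f \<in> extensional {1..d}. prodmap \<pi> d f \<in> prodmap \<pi> d ` Lset T d x} = Lset T d x"
    if "x \<in> \<Omega>" for x
  proof (rule Lset_saturated[OF assms(1)])
    fix g i j assume ij: "0 < i" "i < j" "j \<le> d"
      and "\<pi> x + gmult (int i) g \<in> multiple_points" "\<pi> x + gmult (int j) g \<in> multiple_points"
    then have "\<pi> x \<in> ratio_difference multiple_points i j"
      by (intro mem_ratio_difference multiple_points_translate)
    with ij avoid[OF that] show False
      by auto
  qed
  with \<Omega> show ?thesis
    unfolding top_char_factor_def by blast
qed

end

theorem theorem6p2:
  fixes T :: "'a::metric_space \<Rightarrow> 'a"
    and \<pi> :: "'a \<Rightarrow> 'b::{topological_ab_group_add, metric_space}"
    and \<alpha> :: 'b and d :: nat and A :: "'b set"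
  assumes "minimal_system T"
    and "max_eq_factor T \<pi> \<alpha>"
    and "almost_one_to_one \<pi>"
    and "d \<ge> 2"
    and "A = {y. \<exists>x1 x2. x1 \<noteq> x2 \<and> \<pi> x1 = y \<and> \<pi> x2 = y}"
  shows "(first_category (setdiff_grp (ratset 2 A) A) \<longrightarrow> top_char_factor T \<pi> 2) \<and>
         (d \<ge> 3 \<and> first_category (\<Union>j\<in>{1..d}. \<Union>i\<in>{1..<j}.
              setdiff_grp (ratset (of_nat j / of_nat (j - i)) A) (ratset (of_nat i / of_nat (j - i)) A))
            \<longrightarrow> top_char_factor T \<pi> d)"
proof -
  interpret almost_automorphic_system T \<pi> \<alpha>
    using assms(1-3) by unfold_locales
  have A: "A = multiple_points"
    using assms(5) by (simp add: multiple_points_def)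
  have "{1..2::nat} = {1, 2}" "{1..<2::nat} = {1}" "ratset 1 A = A"
    by (auto simp: ratset_def)
  then have "(\<Union>j\<in>{1..2}. \<Union>i\<in>{1..<j}. ratio_difference A i j) = setdiff_grp (ratset 2 A) A"
    by (simp add: ratio_difference_def)
  then show ?thesis
    using top_char_factor_if_first_category[of 2] top_char_factor_if_first_category[of d]
    unfolding A ratio_difference_def by simp
qed

end
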